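(* Let $d\ge2$ and $i\in\{0,\dots,d-1\}$. Let $(X,\omega)=\#^d_{t_h+it_v}\mathbb{T}^2$ be a $d$-symmetric differential with twist coordinate $[t_h+it_v]\in\mathbb{T}^2_d$. If $(X,\omega)\in\mathscr{C}_i$, then the horizontal foliation of $(X,\omega)$ contains $(i,d)$ maximal cylinders of width $\frac{d}{(i,d)}$ and $(i+1,d)$ maximal cylinders of width $\frac{d}{(i+1,d)}$. If $(X,\omega)\in\partial^{btm}\mathscr{C}_i$, then its horizontal foliation contains $(i,d)$ cylinders of width $\frac{d}{(i,d)}$.
   Context: $(a,d)=\gcd(a,d)$ with $(0,d)=d$. $\mathbb{T}^2=\mathbb{C}/(\mathbb{Z}\oplus\mathbb{Z}i)$, $\mathbb{T}^2_d=\mathbb{C}/d(\mathbb{Z}\oplus\mathbb{Z}i)$. $\#^d_v\mathbb{T}^2$ is obtained by taking $d$ copies of $\mathbb{T}^2$, slitting each along the image of $[0,v]$ and gluing one side of the slit on copy $j$ to the opposite side on copy $j+1\bmod d$ (by limits for non-injective segments); the map $t_h+it_v\mapsto\#^d_{t_h+it_v}\mathbb{T}^2$ descends to twist coordinates on $\mathbb{T}^2_d$, which (minus the integer lattice points) parametrizes the modular fiber $\mathscr{F}^{sym}_d$ of $d$-symmetric differentials over $\mathbb{T}^2$. The horizontal foliation of $\mathscr{F}^{sym}_d\cong\mathbb{T}^2_d$ consists of the $d$ open cylinders $\mathscr{C}_i=\{[t_h+it_v]:\lfloor t_v\rfloor\equiv i \bmod d,\ t_v\notin\mathbb{Z}\}$,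 $i=0,\dots,d-1$, each of width $d$ and height $1$, with bottom boundaries $\partial^{btm}\mathscr{C}_i=\{[t_h+it_v]:t_v\equiv i\bmod d\}$ (minus lattice points). *)

theory Defs
  imports "HOL-Analysis.Analysis"
begin

text \<open>Concrete model of the slit construction #^d_v T^2.
  A point of the surface is represented by a pair (j, z) with j an integer
  (the copy index, read modulo d) and z a complex number (read modulo the
  integer lattice Z + Z i).  The slit in the torus is the image of [0,v];
  its lifts to the plane are the segments [mu, mu + v], mu in the lattice.
  Moving along a straight segment, each transversal crossing of a lift of
  the slit moves one copy forward or backward (according to the side from
  which the slit is crossed); overlapping lifts are counted with
  multiplicity (this is the gluing "by limits").\<close>

definition lattice :: "complex set" where
  "lattice = {of_int a + of_int b * \<i> | a b. True}"

definition cdet :: "complex \<Rightarrow> complex \<Rightarrow> real" where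
  "cdet a b = Im (cnj a * b)"

text \<open>Signed transversal crossing of the open straight segment from a to a + w
  with the open slit lift from mu to mu + v.\<close>
definition seg_cross :: "complex \<Rightarrow> complex \<Rightarrow> complex \<Rightarrow> complex \<Rightarrow> int" where
  "seg_cross v a w \<mu> =
     (if cdet w v = 0 then 0
      else (let r = cdet (\<mu> - a) v / cdet w v; s = cdet (\<mu> - a) w / cdet w v in
            if 0 < r \<and> r < 1 \<and> 0 < s \<and> s < 1
            then (if cdet w v > 0 then 1 else -1) else 0))"

definition crossings :: "complex \<Rightarrow> complex \<Rightarrow> complex \<Rightarrow> int" where
  "crossings v a w = (\<Sum>\<mu> \<in> {\<mu> \<in> lattice. seg_cross v a w \<mu> \<noteq> 0}. seg_cross v a w \<mu>)"

definition slit_move :: "nat \<Rightarrow> complex \<Rightarrow> int \<times> complex \<Rightarrow> complex \<Rightarrow> int \<times> complex" where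
  "slit_move d v p w = ((fst p + crossings v (snd p) w) mod int d, snd p + w)"

definition same_point :: "nat \<Rightarrow> int \<times> complex \<Rightarrow> int \<times> complex \<Rightarrow> bool" where
  "same_point d p q \<longleftrightarrow> fst p mod int d = fst q mod int d \<and> snd p - snd q \<in> lattice"

definition sing_pt :: "complex \<Rightarrow> complex \<Rightarrow> bool" where
  "sing_pt v z \<longleftrightarrow> z \<in> lattice \<or> z - v \<in> lattice"

definition on_slit :: "complex \<Rightarrow> complex \<Rightarrow> bool" where
  "on_slit v z \<longleftrightarrow> (\<exists>\<mu>\<in>lattice. z \<in> closed_segment \<mu> (\<mu> + v))"

definition hreg :: "complex \<Rightarrow> complex \<Rightarrow> bool" where
  "hreg v z \<longleftrightarrow> (\<forall>t::real. \<not> sing_pt v (z + of_real t))"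

definition hclosed :: "nat \<Rightarrow> complex \<Rightarrow> int \<times> complex \<Rightarrow> bool" where
  "hclosed d v p \<longleftrightarrow> (\<exists>t::real. t > 0 \<and> same_point d (slit_move d v p (of_real t)) p)"

definition leaf_length :: "nat \<Rightarrow> complex \<Rightarrow> int \<times> complex \<Rightarrow> real" where
  "leaf_length d v p = Inf {t::real. t > 0 \<and> same_point d (slit_move d v p (of_real t)) p}"

definition cyl_pts :: "nat \<Rightarrow> complex \<Rightarrow> (int \<times> complex) set" where
  "cyl_pts d v = {p. 0 \<le> fst p \<and> fst p < int d \<and> \<not> on_slit v (snd p)
                     \<and> hreg v (snd p) \<and> hclosed d v p}"

definition cyl_step :: "nat \<Rightarrow> complex \<Rightarrow> int \<times> complex \<Rightarrow> int \<times> complex \<Rightarrow> bool" where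
  "cyl_step d v p q \<longleftrightarrow> p \<in> cyl_pts d v \<and> q \<in> cyl_pts d v \<and>
     (same_point d p q
      \<or> (\<exists>t::real. same_point d q (slit_move d v p (of_real t)))
      \<or> (\<exists>s::real. (\<forall>r \<in> closed_segment 0 s.
                       hreg v (snd p + \<i> * of_real r)
                       \<and> hclosed d v (slit_move d v p (\<i> * of_real r)))
                 \<and> same_point d q (slit_move d v p (\<i> * of_real s))))"

text \<open>Maximal horizontal cylinders: connected components of the union of the
  closed regular horizontal leaves (each represented by its off-slit points).\<close>
definition max_cylinders :: "nat \<Rightarrow> complex \<Rightarrow> (int \<times> complex) set set" where
  "max_cylinders d v = {C. \<exists>p \<in> cyl_pts d v. C = {q. equivclp (cyl_step d v) p q}}"

end

(*
  Crossing a lift of the slit moves a path to the next or to the previous copy. Inside a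
  horizontal strip avoiding the cone points, the signed number of slit crossings along a path is
  the increment of a potential counting the slit lifts to the left of a point. Hence one turn
  around the horizontal leaf at height y shifts the copy index by the monodromy
  m(y) = floor(Im v - y) + floor y + 1, so the leaf closes after d / gcd(m(y), d) turns, and the
  copy index corrected by the potential is an invariant modulo gcd(m(y), d). Conversely, points
  with equal monodromy and invariant are joined inside the union of regular leaves, by a
  staircase following the slit direction and a horizontal move given by Bezout's identity; so
  there are exactly gcd(m, d) maximal cylinders of monodromy m. For v = t_h + i t_v the
  monodromy is floor t_v + 1 at heights whose fractional part is below frac t_v and floor t_v
  above; when t_v is an integer only the latter occurs.
*)
theory Submission
  imports Defs
begin

section \<open>Integers, floors and segments\<close>

lemma lattice_iff: "z \<in> lattice \<longleftrightarrow> Re z \<in> \<int> \<and> Im z \<in> \<int>"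
proof
  assume "z \<in> lattice"
  then obtain a b where "z = of_int a + of_int b * \<i>" unfolding lattice_def by auto
  then show "Re z \<in> \<int> \<and> Im z \<in> \<int>" by simp
next
  assume "Re z \<in> \<int> \<and> Im z \<in> \<int>"
  then obtain a b where "Re z = of_int a" "Im z = of_int b" by (auto elim!: Ints_cases)
  then have "z = of_int a + of_int b * \<i>" by (simp add: complex_eq_iff)
  then show "z \<in> lattice" unfolding lattice_def by blast
qed

lemma lattice_diffE:
  assumes "w - z \<in> lattice"
  obtains a b where "w = z + Complex (of_int a) (of_int b)"
proof -
  from assms obtain a b where "Re (w - z) = of_int a" "Im (w - z) = of_int b"
    unfolding lattice_iff by (auto elim!: Ints_cases)
  then show thesis by (intro that[of a b]) (simp add: complex_eq_iff)
qed

lemma add_of_int_in_Ints_iff: "(x::real) + of_int b \<in> \<int> \<longleftrightarrow> x \<in> \<int>"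
  by (metis Ints_add Ints_diff Ints_of_int add_diff_cancel_right')

lemma of_int_between_not_in_Ints: "of_int m < (x::real) \<Longrightarrow> x < of_int m + 1 \<Longrightarrow> x \<notin> \<int>"
proof
  assume "of_int m < x" "x < of_int m + 1" "x \<in> \<int>"
  then obtain k where "x = of_int k" "m < k" "k < m + 1" by (auto elim!: Ints_cases)
  then show False by linarith
qed

lemma floor_minus_not_in_Ints:
  assumes "(x::real) \<notin> \<int>"
  shows "\<lfloor>- x\<rfloor> = - \<lfloor>x\<rfloor> - 1"
proof -
  have "x \<noteq> of_int \<lfloor>x\<rfloor>" using assms by (metis Ints_of_int)
  then show ?thesis by (simp add: floor_minus ceiling_altdef)
qed

lemma uniform_margin_from_Ints:
  fixes x :: "'a \<Rightarrow> real"
  assumes "finite K" "\<forall>k\<in>K. x k \<notin> \<int>"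
  obtains e where "e > 0" "\<forall>k\<in>K. \<forall>\<eta>. \<bar>\<eta>\<bar> < e \<longrightarrow> x k - \<eta> \<notin> \<int>"
proof
  define margin where "margin k = min (frac (x k)) (1 - frac (x k))" for k
  define e where "e = Min (insert 1 (margin ` K))"
  have "frac (x k) \<noteq> 0" if "k \<in> K" for k using assms(2) that by (simp add: frac_eq_0_iff)
  then have "margin k > 0" if "k \<in> K" for k
    using that frac_ge_0[of "x k"] frac_lt_1[of "x k"] unfolding margin_def by fastforce
  then show "e > 0" unfolding e_def using assms(1) by simp
  show "\<forall>k\<in>K. \<forall>\<eta>. \<bar>\<eta>\<bar> < e \<longrightarrow> x k - \<eta> \<notin> \<int>"
  proof (intro ballI allI impI)
    fix k \<eta> assume "k \<in> K" "\<bar>\<eta>\<bar> < e"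
    then have "\<bar>\<eta>\<bar> < margin k" unfolding e_def using assms(1) by (simp add: Min_less_iff)
    then have "of_int \<lfloor>x k\<rfloor> < x k - \<eta>" "x k - \<eta> < of_int \<lfloor>x k\<rfloor> + 1"
      unfolding margin_def frac_def by auto
    then show "x k - \<eta> \<notin> \<int>" by (rule of_int_between_not_in_Ints)
  qed
qed

lemma finite_Ints_open_segment: "finite {m::int. of_int m \<in> open_segment (\<alpha>::real) \<beta>}"
  by (rule finite_subset[of _ "{\<lfloor>min \<alpha> \<beta>\<rfloor> .. \<lceil>max \<alpha> \<beta>\<rceil>}"])
     (auto simp: open_segment_eq_real_ivl floor_le_iff le_ceiling_iff split: if_splits)

lemma card_Ints_open_segment:
  fixes \<alpha> \<beta> :: real
  assumes "\<alpha> \<le> \<beta>" "\<beta> \<notin> \<int>"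
  shows "int (card {m::int. of_int m \<in> open_segment \<alpha> \<beta>}) = \<lfloor>\<beta>\<rfloor> - \<lfloor>\<alpha>\<rfloor>"
proof -
  have "of_int m \<noteq> \<beta>" for m using assms(2) by auto
  moreover have "\<alpha> < of_int m \<longleftrightarrow> \<lfloor>\<alpha>\<rfloor> < m" for m by (simp add: floor_less_iff)
  ultimately have "{m::int. of_int m \<in> open_segment \<alpha> \<beta>} = {\<lfloor>\<alpha>\<rfloor><..\<lfloor>\<beta>\<rfloor>}"
    using assms(1) by (auto simp: open_segment_eq_real_ivl le_floor_iff less_le)
  moreover have "\<lfloor>\<alpha>\<rfloor> \<le> \<lfloor>\<beta>\<rfloor>" using assms(1) by (rule floor_mono)
  ultimately show ?thesis by simp
qed

lemma signed_card_Ints_open_segment: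
  fixes \<alpha> \<beta> :: real
  assumes "\<alpha> \<notin> \<int>" "\<beta> \<notin> \<int>"
  shows "(if \<alpha> \<le> \<beta> then 1 else -1) * int (card {m::int. of_int m \<in> open_segment \<alpha> \<beta>})
           = \<lfloor>\<beta>\<rfloor> - \<lfloor>\<alpha>\<rfloor>"
proof (cases "\<alpha> \<le> \<beta>")
  case True
  then show ?thesis using card_Ints_open_segment[OF True assms(2)] by simp
next
  case False
  then have "\<beta> \<le> \<alpha>" by simp
  then have "int (card {m::int. of_int m \<in> open_segment \<alpha> \<beta>}) = \<lfloor>\<alpha>\<rfloor> - \<lfloor>\<beta>\<rfloor>"
    by (subst open_segment_commute) (rule card_Ints_open_segment[OF _ assms(1)])
  then show ?thesis using False by simp
qed

lemma add_mult_in_closed_segment: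
  fixes x h r :: real
  assumes "0 \<le> r" "r \<le> 1"
  shows "x + r * h \<in> closed_segment x (x + h)"
  unfolding in_segment using assms by (intro exI[of _ r]) (auto simp: algebra_simps)

lemma open_segment_iff_divide:
  fixes x \<alpha> D :: real
  assumes "D \<noteq> 0"
  shows "x \<in> open_segment \<alpha> (\<alpha> + D) \<longleftrightarrow> 0 < (x - \<alpha>) / D \<and> (x - \<alpha>) / D < 1"
  using assms
  by (cases "D > 0") (auto simp: open_segment_eq_real_ivl zero_less_divide_iff divide_less_eq)

lemma dvd_mult_iff_div_gcd_dvd:
  fixes d n s :: int
  assumes "d \<noteq> 0"
  shows "d dvd n * s \<longleftrightarrow> d div gcd s d dvd n"
proof -
  define G where "G = gcd s d"
  obtain d' s' where ds: "d = G * d'" "s = G * s'"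
    unfolding G_def by (meson dvd_def gcd_dvd1 gcd_dvd2)
  have G: "G \<noteq> 0" using assms unfolding G_def by simp
  have d': "d div G = d'" and s': "s div G = s'" using ds G by simp_all
  have "coprime d' s'"
    using div_gcd_coprime[of s d] assms d' s' unfolding G_def by (simp add: coprime_commute)
  have "d dvd n * s \<longleftrightarrow> G * d' dvd G * (n * s')" unfolding ds by (simp add: ac_simps)
  also have "\<dots> \<longleftrightarrow> d' dvd n * s'" using G by simp
  also have "\<dots> \<longleftrightarrow> d' dvd n" using \<open>coprime d' s'\<close> by (simp add: coprime_dvd_mult_left_iff)
  finally show ?thesis using d' by (simp add: G_def)
qed

lemma gcd_int_eq_if_mod_eq:
  assumes "(m::int) mod int d = int i"
  shows "gcd m (int d) = int (gcd i d)" "gcd (m + 1) (int d) = int (gcd (i + 1) d)"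
proof -
  show "gcd m (int d) = int (gcd i d)"
    using gcd_red_int[of m "int d"] assms by (simp add: gcd.commute)
  have "(m + 1) mod int d = (int i + 1) mod int d"
    using mod_add_left_eq[of m "int d" 1] assms by simp
  then have "gcd (m + 1) (int d) = gcd (int i + 1) (int d)"
    using gcd_red_int[of "m + 1" "int d"] gcd_red_int[of "int i + 1" "int d"] by simp
  then show "gcd (m + 1) (int d) = int (gcd (i + 1) d)"
    using gcd_int_int_eq[of "i + 1" d] by (simp add: add.commute)
qed

section \<open>Regular heights and the slit potential\<close>

definition regular_height :: "complex \<Rightarrow> real \<Rightarrow> bool" where
  "regular_height v y \<longleftrightarrow> y \<notin> \<int> \<and> y - Im v \<notin> \<int>"

lemma hreg_iff_regular_height: "hreg v z \<longleftrightarrow> regular_height v (Im z)"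
proof
  assume h: "hreg v z"
  show "regular_height v (Im z)" unfolding regular_height_def
  proof (intro conjI notI)
    assume "Im z \<in> \<int>"
    then have "sing_pt v (z + of_real (- Re z))" unfolding sing_pt_def lattice_iff by simp
    then show False using h unfolding hreg_def by blast
  next
    assume "Im z - Im v \<in> \<int>"
    then have "sing_pt v (z + of_real (Re v - Re z))" unfolding sing_pt_def lattice_iff by simp
    then show False using h unfolding hreg_def by blast
  qed
next
  assume "regular_height v (Im z)"
  then show "hreg v z" unfolding hreg_def sing_pt_def lattice_iff regular_height_def by simp
qed

lemma regular_height_add_of_int: "regular_height v (y + of_int b) \<longleftrightarrow> regular_height v y"
  using add_of_int_in_Ints_iff[of y b] add_of_int_in_Ints_iff[of "y - Im v" b]
  unfolding regular_height_def by (simp add: diff_add_eq)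

text \<open>The rows k of lattice points whose slit lift, from (m, k) to (m, k) + v, crosses the
  height y.\<close>
definition slit_levels :: "complex \<Rightarrow> real \<Rightarrow> int set" where
  "slit_levels v y = {k. 0 < (y - of_int k) / Im v \<and> (y - of_int k) / Im v < 1}"

definition slit_sign :: "complex \<Rightarrow> int" where
  "slit_sign v = (if Im v > 0 then 1 else -1)"

text \<open>The horizontal position of z relative to the slit lift through the row k, taken at the
  height of z: z lies on the lift starting at (m, k) iff this value is m.\<close>
definition slit_abscissa :: "complex \<Rightarrow> int \<Rightarrow> complex \<Rightarrow> real" where
  "slit_abscissa v k z = Re z - Re v * (Im z - of_int k) / Im v"

text \<open>A signed count of the slit lifts passing to the left of z; along any path inside a strip of
  regular heights the number of slit crossings is the increment of this potential.\<close>
definition slit_potential :: "complex \<Rightarrow> complex \<Rightarrow> int" where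
  "slit_potential v z = slit_sign v * (\<Sum>k\<in>slit_levels v (Im z). \<lfloor>slit_abscissa v k z\<rfloor>)"

text \<open>The shift of the copy index after one turn around the horizontal leaf at height y.\<close>
definition monodromy :: "complex \<Rightarrow> real \<Rightarrow> int" where
  "monodromy v y = slit_sign v * int (card (slit_levels v y))"

definition off_slit :: "complex \<Rightarrow> complex \<Rightarrow> bool" where
  "off_slit v z \<longleftrightarrow> (\<forall>k\<in>slit_levels v (Im z). slit_abscissa v k z \<notin> \<int>)"

lemma slit_levels_iff_pos: "Im v > 0 \<Longrightarrow> k \<in> slit_levels v y \<longleftrightarrow> of_int k < y \<and> y < of_int k + Im v"
  unfolding slit_levels_def by (auto simp: field_simps)

lemma slit_levels_iff_neg: "Im v < 0 \<Longrightarrow> k \<in> slit_levels v y \<longleftrightarrow> of_int k + Im v < y \<and> y < of_int k"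
  unfolding slit_levels_def by (auto simp: field_simps)

lemma slit_levels_horizontal: "Im v = 0 \<Longrightarrow> slit_levels v y = {}"
  unfolding slit_levels_def by auto

lemma finite_slit_levels: "finite (slit_levels v y)"
proof (rule finite_subset)
  show "slit_levels v y \<subseteq> {\<lfloor>y - \<bar>Im v\<bar>\<rfloor> .. \<lceil>y + \<bar>Im v\<bar>\<rceil>}"
    by (cases rule: linorder_cases[of "Im v" 0])
       (auto simp: slit_levels_iff_pos slit_levels_iff_neg slit_levels_horizontal
         floor_le_iff le_ceiling_iff)
qed simp

lemma slit_levels_add_of_int: "slit_levels v (y + of_int b) = (\<lambda>k. k + b) ` slit_levels v y"
proof -
  have shift: "k \<in> slit_levels v (y + of_int b) \<longleftrightarrow> k - b \<in> slit_levels v y" for k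
    unfolding slit_levels_def by (simp add: algebra_simps)
  show ?thesis
  proof (intro set_eqI iffI)
    fix k assume "k \<in> slit_levels v (y + of_int b)"
    then have "k - b \<in> slit_levels v y" using shift by blast
    then show "k \<in> (\<lambda>k. k + b) ` slit_levels v y" by (rule rev_image_eqI) simp
  next
    fix k assume "k \<in> (\<lambda>k. k + b) ` slit_levels v y"
    then obtain l where "k = l + b" "l \<in> slit_levels v y" by blast
    then show "k \<in> slit_levels v (y + of_int b)" using shift[of k] by simp
  qed
qed

lemma slit_levels_eq_if_regular:
  assumes "\<forall>y\<in>closed_segment y1 y2. regular_height v y"
  shows "slit_levels v y1 = slit_levels v y2"
proof -
  have "k \<in> slit_levels v y2"
    if "k \<in> slit_levels v y1" "\<forall>y\<in>closed_segment y1 y2. regular_height v y" for k y1 y2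
  proof -
    have "of_int k \<notin> closed_segment y1 y2" "of_int k + Im v \<notin> closed_segment y1 y2"
      using that(2) unfolding regular_height_def by auto
    with that(1) show ?thesis
      by (cases rule: linorder_cases[of "Im v" 0])
         (auto simp: slit_levels_iff_pos slit_levels_iff_neg slit_levels_horizontal
           closed_segment_eq_real_ivl split: if_splits)
  qed
  then show ?thesis using assms closed_segment_commute by blast
qed

lemma monodromy_add_of_int: "monodromy v (y + of_int b) = monodromy v y"
  unfolding monodromy_def slit_levels_add_of_int by (simp add: card_image inj_on_def)

lemma slit_abscissa_add_lattice:
  "Im v \<noteq> 0 \<Longrightarrow>
     slit_abscissa v (k + b) (z + Complex (of_int a) (of_int b)) = slit_abscissa v k z + of_int a"
  unfolding slit_abscissa_def by (simp add: field_simps)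

lemma slit_potential_add_lattice:
  "slit_potential v (z + Complex (of_int a) (of_int b)) = slit_potential v z + a * monodromy v (Im z)"
proof (cases "Im v = 0")
  case True
  then show ?thesis by (simp add: slit_potential_def monodromy_def slit_levels_horizontal)
next
  case False
  have "slit_potential v (z + Complex (of_int a) (of_int b))
        = slit_sign v * (\<Sum>k\<in>slit_levels v (Im z). \<lfloor>slit_abscissa v k z\<rfloor> + a)"
    unfolding slit_potential_def
    by (simp add: slit_levels_add_of_int sum.reindex inj_on_def slit_abscissa_add_lattice[OF False])
  then show ?thesis
    by (simp add: slit_potential_def monodromy_def sum.distrib algebra_simps)
qed

lemma off_slit_add_lattice: "off_slit v (z + Complex (of_int a) (of_int b)) \<longleftrightarrow> off_slit v z"
proof (cases "Im v = 0")
  case True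
  then show ?thesis by (simp add: off_slit_def slit_levels_horizontal)
next
  case False
  then show ?thesis
    by (simp add: off_slit_def slit_levels_add_of_int slit_abscissa_add_lattice add_of_int_in_Ints_iff)
qed

lemma on_slit_iff_not_off_slit:
  assumes reg: "regular_height v (Im z)"
  shows "on_slit v z \<longleftrightarrow> \<not> off_slit v z"
proof
  assume "on_slit v z"
  then obtain \<mu> u where "\<mu> \<in> lattice" "0 \<le> u" "u \<le> 1" and z: "z = \<mu> + u *\<^sub>R v"
    unfolding on_slit_def in_segment by (auto simp: algebra_simps)
  then obtain m k where m: "Re z = of_int m + u * Re v" and k: "Im z = of_int k + u * Im v"
    unfolding lattice_iff by (auto elim!: Ints_cases)
  have "Im v \<noteq> 0" "u \<noteq> 0" "u \<noteq> 1"
    using reg k unfolding regular_height_def by auto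
  with \<open>0 \<le> u\<close> \<open>u \<le> 1\<close> have "k \<in> slit_levels v (Im z)" "slit_abscissa v k z = of_int m"
    using m k by (simp_all add: slit_levels_def slit_abscissa_def)
  then show "\<not> off_slit v z" unfolding off_slit_def by (metis Ints_of_int)
next
  assume "\<not> off_slit v z"
  then obtain k m where k: "k \<in> slit_levels v (Im z)" and m: "slit_abscissa v k z = of_int m"
    unfolding off_slit_def by (auto elim!: Ints_cases)
  have "Im v \<noteq> 0" using k slit_levels_horizontal by fastforce
  define u where "u = (Im z - of_int k) / Im v"
  have "0 \<le> u" "u \<le> 1" using k unfolding slit_levels_def u_def by auto
  moreover have "z = Complex (of_int m) (of_int k) + u *\<^sub>R v"
    using m \<open>Im v \<noteq> 0\<close> unfolding slit_abscissa_def u_def by (simp add: complex_eq_iff field_simps)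
  moreover have "Complex (of_int m) (of_int k) \<in> lattice" unfolding lattice_iff by simp
  ultimately show "on_slit v z"
    unfolding on_slit_def in_segment by (intro bexI exI[of _ u]) (auto simp: algebra_simps)
qed

lemma monodromy_eq_floor:
  assumes "regular_height v y"
  shows "monodromy v y = \<lfloor>Im v - y\<rfloor> + \<lfloor>y\<rfloor> + 1"
proof -
  have y: "y \<notin> \<int>" and yv: "y - Im v \<notin> \<int>" using assms unfolding regular_height_def by auto
  have fl: "\<lfloor>y - Im v\<rfloor> = - \<lfloor>Im v - y\<rfloor> - 1"
    using floor_minus_not_in_Ints[of "Im v - y"] yv by (metis Ints_minus minus_diff_eq)
  consider "Im v > 0" | "Im v < 0" | "Im v = 0" by linarith
  then show ?thesis
  proof cases
    case 1
    have "slit_levels v y = {m::int. of_int m \<in> open_segment (y - Im v) y}"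
      using 1 by (auto simp: slit_levels_iff_pos open_segment_eq_real_ivl algebra_simps)
    then show ?thesis using card_Ints_open_segment[of "y - Im v" y] 1 y fl
      by (simp add: monodromy_def slit_sign_def)
  next
    case 2
    have "slit_levels v y = {m::int. of_int m \<in> open_segment y (y - Im v)}"
      using 2 by (auto simp: slit_levels_iff_neg open_segment_eq_real_ivl algebra_simps)
    then show ?thesis using card_Ints_open_segment[of y "y - Im v"] 2 yv fl
      by (simp add: monodromy_def slit_sign_def)
  next
    case 3
    then show ?thesis using floor_minus_not_in_Ints[OF y]
      by (simp add: monodromy_def slit_levels_horizontal)
  qed
qed

lemma regular_height_unit_interval:
  assumes "0 < y" "y < 1" "y \<noteq> frac (Im v)"
  shows "regular_height v y"
proof -
  define a where "a = \<lfloor>Im v\<rfloor>"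
  define f where "f = frac (Im v)"
  have v: "Im v = of_int a + f" unfolding a_def f_def by (simp add: frac_def)
  have f: "0 \<le> f" "f < 1" unfolding f_def by (rule frac_ge_0, rule frac_lt_1)
  have "y \<notin> \<int>" using assms by (intro of_int_between_not_in_Ints[of 0]) simp_all
  moreover have "y - Im v \<notin> \<int>"
  proof (cases "y < f")
    case True
    then show ?thesis
      using assms(1) f unfolding v by (intro of_int_between_not_in_Ints[of "- a - 1"]) simp_all
  next
    case False
    then have "f < y" using assms(3) unfolding f_def by simp
    then show ?thesis
      using assms(2) f unfolding v by (intro of_int_between_not_in_Ints[of "- a"]) simp_all
  qed
  ultimately show ?thesis unfolding regular_height_def ..
qed

lemma monodromy_eq_frac:
  assumes "regular_height v y"
  shows "monodromy v y = (if frac y < frac (Im v) then \<lfloor>Im v\<rfloor> + 1 else \<lfloor>Im v\<rfloor>)"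
proof -
  define a where "a = \<lfloor>Im v\<rfloor>"
  define f where "f = frac (Im v)"
  define g where "g = frac y"
  have v: "Im v = of_int a + f" unfolding a_def f_def by (simp add: frac_def)
  have f: "0 \<le> f" "f < 1" unfolding f_def by (rule frac_ge_0, rule frac_lt_1)
  have y_eq: "g = y + of_int (- \<lfloor>y\<rfloor>)" unfolding g_def frac_def by simp
  have reg: "regular_height v g"
    using assms regular_height_add_of_int unfolding y_eq by blast
  have shift: "g - Im v = (g - f) + of_int (- a)" unfolding v by simp
  have "g \<notin> \<int>" "(g - f) + of_int (- a) \<notin> \<int>"
    using reg unfolding regular_height_def shift by simp_all
  then have "g \<notin> \<int>" "g - f \<notin> \<int>" unfolding add_of_int_in_Ints_iff .
  then have g: "0 < g" "g < 1" "g \<noteq> f"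
    using frac_ge_0[of y] frac_lt_1[of y] unfolding g_def by (auto simp: order_le_less)
  have "\<lfloor>Im v - g\<rfloor> = (if g < f then a else a - 1)"
    unfolding v using f g by (auto simp: floor_eq_iff)
  moreover have "\<lfloor>g\<rfloor> = 0" using g by (simp add: floor_eq_iff)
  moreover have "monodromy v y = monodromy v g"
    unfolding y_eq monodromy_add_of_int ..
  ultimately show ?thesis
    using monodromy_eq_floor[OF reg] unfolding a_def[symmetric] f_def[symmetric] g_def[symmetric]
    by simp
qed

section \<open>Counting slit crossings\<close>

lemma cdet_eq: "cdet a b = Re a * Im b - Im a * Re b"
  unfolding cdet_def by simp

lemma slit_abscissa_add:
  "Im v \<noteq> 0 \<Longrightarrow> slit_abscissa v k (a + w) = slit_abscissa v k a + cdet w v / Im v"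
  unfolding slit_abscissa_def cdet_eq by (simp add: field_simps)

text \<open>The two quotients are the parameters, along the segment and along the slit lift, of the
  intersection point of their supporting lines; both sides are the height of that point.\<close>
lemma seg_cross_parameters:
  assumes "cdet w v \<noteq> 0"
  shows "Im a + (cdet (\<mu> - a) v / cdet w v) * Im w = Im \<mu> + (cdet (\<mu> - a) w / cdet w v) * Im v"
  using assms unfolding cdet_eq by (simp add: field_simps)

lemma seg_cross_nonzero_iff:
  "seg_cross v a w \<mu> \<noteq> 0 \<longleftrightarrow> cdet w v \<noteq> 0 \<and>
     0 < cdet (\<mu> - a) v / cdet w v \<and> cdet (\<mu> - a) v / cdet w v < 1 \<and>
     0 < cdet (\<mu> - a) w / cdet w v \<and> cdet (\<mu> - a) w / cdet w v < 1"
  unfolding seg_cross_def Let_def by auto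

lemma seg_cross_nonzero_eq:
  "seg_cross v a w \<mu> \<noteq> 0 \<Longrightarrow> seg_cross v a w \<mu> = (if cdet w v > 0 then 1 else -1)"
  unfolding seg_cross_def Let_def by (auto split: if_splits)

lemma slit_levels_along_segment:
  assumes "\<forall>y\<in>closed_segment (Im a) (Im (a + w)). regular_height v y" "0 \<le> r" "r \<le> 1"
  shows "slit_levels v (Im a + r * Im w) = slit_levels v (Im a)"
    and "regular_height v (Im a + r * Im w)"
proof -
  have "Im a + r * Im w \<in> closed_segment (Im a) (Im (a + w))"
    using add_mult_in_closed_segment[OF assms(2,3)] by simp
  then have "closed_segment (Im a + r * Im w) (Im a) \<subseteq> closed_segment (Im a) (Im (a + w))"
    by (simp add: subset_closed_segment)
  with assms(1) show "slit_levels v (Im a + r * Im w) = slit_levels v (Im a)"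
    by (intro slit_levels_eq_if_regular) blast
  show "regular_height v (Im a + r * Im w)"
    using assms(1) \<open>Im a + r * Im w \<in> _\<close> by blast
qed

lemma crossings_horizontal_slit:
  assumes strip: "\<forall>y\<in>closed_segment (Im a) (Im (a + w)). regular_height v y" and "Im v = 0"
  shows "crossings v a w = 0"
proof -
  have "seg_cross v a w \<mu> = 0" if "\<mu> \<in> lattice" for \<mu>
  proof (rule ccontr)
    assume "seg_cross v a w \<mu> \<noteq> 0"
    then have c: "cdet w v \<noteq> 0" and r: "0 \<le> cdet (\<mu> - a) v / cdet w v" "cdet (\<mu> - a) v / cdet w v \<le> 1"
      unfolding seg_cross_nonzero_iff by auto
    have "Im a + (cdet (\<mu> - a) v / cdet w v) * Im w = Im \<mu>"
      using seg_cross_parameters[OF c, of a \<mu>] \<open>Im v = 0\<close> by simp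
    moreover have "Im \<mu> \<in> \<int>" using that unfolding lattice_iff by simp
    ultimately show False
      using slit_levels_along_segment(2)[OF strip r] unfolding regular_height_def by simp
  qed
  then show ?thesis unfolding crossings_def by simp
qed

lemma seg_cross_lattice_iff:
  assumes strip: "\<forall>y\<in>closed_segment (Im a) (Im (a + w)). regular_height v y"
    and v: "Im v \<noteq> 0" and c: "cdet w v \<noteq> 0"
  shows "seg_cross v a w (Complex (of_int m) (of_int k)) \<noteq> 0 \<longleftrightarrow>
           k \<in> slit_levels v (Im a) \<and>
           of_int m \<in> open_segment (slit_abscissa v k a) (slit_abscissa v k (a + w))"
proof -
  define \<mu> where "\<mu> = Complex (of_int m) (of_int k)"
  define r where "r = cdet (\<mu> - a) v / cdet w v"
  define s where "s = cdet (\<mu> - a) w / cdet w v"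
  have D: "cdet w v / Im v \<noteq> 0" using v c by simp
  have "cdet (\<mu> - a) v = (of_int m - slit_abscissa v k a) * Im v"
    unfolding \<mu>_def slit_abscissa_def cdet_eq using v by (simp add: field_simps)
  then have r_eq: "r = (of_int m - slit_abscissa v k a) / (cdet w v / Im v)"
    unfolding r_def using v by simp
  have s_eq: "s = (Im a + r * Im w - of_int k) / Im v"
    using seg_cross_parameters[OF c, of a \<mu>] v unfolding r_def s_def \<mu>_def by simp
  have "seg_cross v a w \<mu> \<noteq> 0 \<longleftrightarrow> (0 < r \<and> r < 1) \<and> (0 < s \<and> s < 1)"
    unfolding seg_cross_nonzero_iff r_def s_def using c by auto
  also have "\<dots> \<longleftrightarrow> (0 < r \<and> r < 1) \<and> k \<in> slit_levels v (Im a)"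
  proof (cases "0 < r \<and> r < 1")
    case True
    have "k \<in> slit_levels v (Im a + r * Im w) \<longleftrightarrow> 0 < s \<and> s < 1"
      unfolding s_eq slit_levels_def by simp
    moreover have "slit_levels v (Im a + r * Im w) = slit_levels v (Im a)"
      using True by (intro slit_levels_along_segment(1)[OF strip]) auto
    ultimately show ?thesis using True by simp
  qed auto
  also have "0 < r \<and> r < 1 \<longleftrightarrow>
      of_int m \<in> open_segment (slit_abscissa v k a) (slit_abscissa v k (a + w))"
    unfolding r_eq slit_abscissa_add[OF v] by (rule open_segment_iff_divide[OF D, symmetric])
  finally show ?thesis unfolding \<mu>_def by blast
qed

lemma crossing_lattice_points:
  assumes strip: "\<forall>y\<in>closed_segment (Im a) (Im (a + w)). regular_height v y"
    and "Im v \<noteq> 0" "cdet w v \<noteq> 0"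
  shows "{\<mu> \<in> lattice. seg_cross v a w \<mu> \<noteq> 0} =
           (\<lambda>(k, m). Complex (of_int m) (of_int k)) `
             (SIGMA k:slit_levels v (Im a).
                {m. of_int m \<in> open_segment (slit_abscissa v k a) (slit_abscissa v k (a + w))})"
proof (intro set_eqI iffI)
  fix \<mu> assume "\<mu> \<in> {\<mu> \<in> lattice. seg_cross v a w \<mu> \<noteq> 0}"
  then obtain m k where "\<mu> = Complex (of_int m) (of_int k)" "seg_cross v a w \<mu> \<noteq> 0"
    unfolding lattice_iff by (auto simp: complex_eq_iff elim!: Ints_cases)
  then show "\<mu> \<in> (\<lambda>(k, m). Complex (of_int m) (of_int k)) `
               (SIGMA k:slit_levels v (Im a).
                  {m. of_int m \<in> open_segment (slit_abscissa v k a) (slit_abscissa v k (a + w))})"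
    using seg_cross_lattice_iff[OF assms] by (auto intro!: image_eqI[of _ _ "(k, m)"])
qed (use seg_cross_lattice_iff[OF assms] in \<open>auto simp: lattice_iff\<close>)

lemma crossings_eq_potential_diff:
  assumes strip: "\<forall>y\<in>closed_segment (Im a) (Im (a + w)). regular_height v y"
    and off: "off_slit v a" "off_slit v (a + w)"
  shows "crossings v a w = slit_potential v (a + w) - slit_potential v a"
proof -
  define K where "K = slit_levels v (Im a)"
  have K_end: "slit_levels v (Im (a + w)) = K"
    using slit_levels_along_segment(1)[OF strip, of 1] unfolding K_def by simp
  consider "Im v = 0" | "Im v \<noteq> 0" "cdet w v = 0" | "Im v \<noteq> 0" "cdet w v \<noteq> 0" by blast
  then show ?thesis
  proof cases
    case 1
    then show ?thesis using crossings_horizontal_slit[OF strip]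
      by (simp add: slit_potential_def slit_levels_horizontal)
  next
    case 2
    then show ?thesis
      unfolding crossings_def slit_potential_def K_end
      by (simp add: seg_cross_def K_def slit_abscissa_add)
  next
    case 3
    define \<alpha> where "\<alpha> k = slit_abscissa v k a" for k
    define \<beta> where "\<beta> k = slit_abscissa v k (a + w)" for k
    define B where "B k = {m::int. of_int m \<in> open_segment (\<alpha> k) (\<beta> k)}" for k
    define sc :: int where "sc = (if cdet w v > 0 then 1 else -1)"
    define lift where "lift = (\<lambda>(k::int, m::int). Complex (of_int m) (of_int k))"
    have crossing_set: "{\<mu> \<in> lattice. seg_cross v a w \<mu> \<noteq> 0} = lift ` (SIGMA k:K. B k)"
      unfolding lift_def K_def B_def \<alpha>_def \<beta>_def by (rule crossing_lattice_points[OF strip 3])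
    have signed_count: "sc * int (card (B k)) = slit_sign v * (\<lfloor>\<beta> k\<rfloor> - \<lfloor>\<alpha> k\<rfloor>)" if "k \<in> K" for k
    proof -
      have "\<beta> k = \<alpha> k + cdet w v / Im v"
        unfolding \<alpha>_def \<beta>_def using 3 by (simp add: slit_abscissa_add)
      then have "sc = slit_sign v * (if \<alpha> k \<le> \<beta> k then 1 else -1)"
        using 3 unfolding sc_def slit_sign_def
        by (auto simp: zero_le_divide_iff)
      moreover have "\<alpha> k \<notin> \<int>" "\<beta> k \<notin> \<int>"
        using off that K_end unfolding off_slit_def \<alpha>_def \<beta>_def K_def by auto
      ultimately show ?thesis
        using signed_card_Ints_open_segment[of "\<alpha> k" "\<beta> k"] unfolding B_def by simp
    qed
    have "crossings v a w = (\<Sum>\<mu>\<in>lift ` (SIGMA k:K. B k). sc)"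
      unfolding crossings_def crossing_set sc_def
      by (intro sum.cong refl seg_cross_nonzero_eq) (use crossing_set in blast)
    also have "\<dots> = sc * int (card (SIGMA k:K. B k))"
      by (simp add: card_image inj_on_def lift_def)
    also have "\<dots> = (\<Sum>k\<in>K. sc * int (card (B k)))"
      using finite_Ints_open_segment finite_slit_levels
      by (simp add: K_def B_def card_SigmaI sum_distrib_left)
    also have "\<dots> = (\<Sum>k\<in>K. slit_sign v * (\<lfloor>\<beta> k\<rfloor> - \<lfloor>\<alpha> k\<rfloor>))"
      by (intro sum.cong refl signed_count)
    also have "\<dots> = slit_potential v (a + w) - slit_potential v a"
      unfolding slit_potential_def K_end K_def \<alpha>_def \<beta>_def
      by (simp add: sum_subtractf sum_distrib_left right_diff_distrib)
    finally show ?thesis .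
  qed
qed

lemma crossings_horizontal:
  assumes "regular_height v (Im z)" "off_slit v z" "off_slit v (z + of_real t)"
  shows "crossings v z (of_real t) = slit_potential v (z + of_real t) - slit_potential v z"
  using assms by (intro crossings_eq_potential_diff) auto

lemma add_of_int_eq_add_lattice: "z + of_int n = z + Complex (of_int n) (of_int 0)"
  by (simp add: complex_eq_iff)

lemma crossings_full_turns:
  assumes "regular_height v (Im z)" "off_slit v z"
  shows "crossings v z (of_int n) = n * monodromy v (Im z)"
proof -
  have "off_slit v (z + of_real (of_int n))"
    using assms(2) off_slit_add_lattice[of v z n 0] by (simp add: add_of_int_eq_add_lattice)
  from crossings_horizontal[OF assms this] show ?thesis
    using slit_potential_add_lattice[of v z n 0] by (simp add: add_of_int_eq_add_lattice)
qed

section \<open>The cylinder invariant\<close>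

lemma hclosed_if_off_slit:
  assumes "d > 0" "regular_height v (Im z)" "off_slit v z"
  shows "hclosed d v (j, z)"
proof -
  have "same_point d (slit_move d v (j, z) (of_real (real d))) (j, z)"
    using crossings_full_turns[OF assms(2,3), of "int d"]
    unfolding slit_move_def same_point_def lattice_iff by simp
  then show ?thesis unfolding hclosed_def using assms(1) by (intro exI[of _ "real d"]) simp
qed

lemma cyl_pts_iff:
  assumes "d > 0"
  shows "p \<in> cyl_pts d v \<longleftrightarrow>
           0 \<le> fst p \<and> fst p < int d \<and> regular_height v (Im (snd p)) \<and> off_slit v (snd p)"
  using hclosed_if_off_slit[OF assms, of v "snd p" "fst p"] on_slit_iff_not_off_slit[of v "snd p"]
  unfolding cyl_pts_def hreg_iff_regular_height by auto

lemma same_point_refl: "same_point d p p"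
  unfolding same_point_def lattice_iff by simp

text \<open>Inside a strip of regular heights the copy index changes by the increment of the slit
  potential, a lattice translation changes the potential by a multiple of the monodromy, and
  the gluing identifies copy indices modulo d; so the corrected index is well defined modulo
  the gcd of the monodromy and d.\<close>
definition cylinder_invariant :: "nat \<Rightarrow> complex \<Rightarrow> int \<times> complex \<Rightarrow> int \<times> int" where
  "cylinder_invariant d v p =
     (monodromy v (Im (snd p)),
      (fst p - slit_potential v (snd p)) mod gcd (monodromy v (Im (snd p))) (int d))"

lemma cylinder_invariant_same_point:
  assumes "same_point d p q"
  shows "cylinder_invariant d v p = cylinder_invariant d v q"
proof -
  obtain a b where pq: "snd p = snd q + Complex (of_int a) (of_int b)"
    using assms unfolding same_point_def by (auto elim: lattice_diffE)
  define s where "s = monodromy v (Im (snd q))"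
  have s_p: "monodromy v (Im (snd p)) = s"
    unfolding pq s_def using monodromy_add_of_int[of v "Im (snd q)" b] by simp
  have "int d dvd fst p - fst q" using assms unfolding same_point_def by (simp add: mod_eq_dvd_iff)
  then have "gcd s (int d) dvd fst p - fst q" by (rule dvd_trans[OF gcd_dvd2])
  then have "gcd s (int d) dvd (fst p - fst q) - a * s" by (rule dvd_diff[OF _ dvd_mult[OF gcd_dvd1]])
  moreover have diff: "(fst p - slit_potential v (snd p)) - (fst q - slit_potential v (snd q))
                       = (fst p - fst q) - a * s"
    unfolding pq slit_potential_add_lattice s_def by simp
  ultimately have "gcd s (int d) dvd
                     (fst p - slit_potential v (snd p)) - (fst q - slit_potential v (snd q))"
    by (simp only:)
  then show ?thesis
    unfolding cylinder_invariant_def s_p s_def[symmetric] by (simp add: mod_eq_dvd_iff)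
qed

lemma cylinder_invariant_slit_move:
  assumes "crossings v z w = slit_potential v (z + w) - slit_potential v z"
    and "monodromy v (Im (z + w)) = monodromy v (Im z)"
  shows "cylinder_invariant d v (slit_move d v (j, z) w) = cylinder_invariant d v (j, z)"
proof -
  define X where "X = j + (slit_potential v (z + w) - slit_potential v z)"
  have "int d dvd X mod int d - X" by (simp add: mod_eq_dvd_iff[symmetric])
  moreover have "(X mod int d - slit_potential v (z + w)) - (j - slit_potential v z) = X mod int d - X"
    unfolding X_def by simp
  ultimately have "gcd (monodromy v (Im z)) (int d)
                     dvd (X mod int d - slit_potential v (z + w)) - (j - slit_potential v z)"
    by (metis dvd_trans gcd_dvd2)
  then show ?thesis
    unfolding cylinder_invariant_def slit_move_def using assms X_def by (simp add: mod_eq_dvd_iff)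
qed

lemma cylinder_invariant_cyl_step:
  assumes d: "d > 0" and step: "cyl_step d v p q"
  shows "cylinder_invariant d v p = cylinder_invariant d v q"
proof -
  obtain j z where p: "p = (j, z)" by (cases p)
  have reg: "regular_height v (Im z)" and off: "off_slit v z"
    using step unfolding cyl_step_def cyl_pts_iff[OF d] p by auto
  have off_q: "off_slit v (snd q)" using step unfolding cyl_step_def cyl_pts_iff[OF d] by auto
  have off_end: "off_slit v (z + w)" if "same_point d q (slit_move d v p w)" for w
    using that off_q unfolding same_point_def slit_move_def p
    by (auto elim!: lattice_diffE simp: off_slit_add_lattice)
  consider "same_point d p q"
    | t where "same_point d q (slit_move d v p (of_real t))"
    | s where "\<forall>r \<in> closed_segment 0 s. hreg v (snd p + \<i> * of_real r)"
        "same_point d q (slit_move d v p (\<i> * of_real s))"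
    using step unfolding cyl_step_def by blast
  then show ?thesis
  proof cases
    case 1
    then show ?thesis by (rule cylinder_invariant_same_point)
  next
    case (2 t)
    have "cylinder_invariant d v (slit_move d v (j, z) (of_real t)) = cylinder_invariant d v (j, z)"
      by (rule cylinder_invariant_slit_move[OF crossings_horizontal[OF reg off off_end[OF 2]]]) simp
    then show ?thesis using cylinder_invariant_same_point[OF 2] p by simp
  next
    case (3 s)
    have strip: "\<forall>y\<in>closed_segment (Im z) (Im (z + \<i> * of_real s)). regular_height v y"
    proof
      fix y assume "y \<in> closed_segment (Im z) (Im (z + \<i> * of_real s))"
      then have "y - Im z \<in> closed_segment 0 s"
        by (auto simp: closed_segment_eq_real_ivl split: if_splits)
      then have "hreg v (z + \<i> * of_real (y - Im z))" using 3 p by auto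
      then show "regular_height v y" unfolding hreg_iff_regular_height by simp
    qed
    have "monodromy v (Im (z + \<i> * of_real s)) = monodromy v (Im z)"
      using slit_levels_eq_if_regular[OF strip] unfolding monodromy_def by simp
    with crossings_eq_potential_diff[OF strip off off_end[OF 3(2)]]
    have "cylinder_invariant d v (slit_move d v (j, z) (\<i> * of_real s)) = cylinder_invariant d v (j, z)"
      by (rule cylinder_invariant_slit_move)
    then show ?thesis using cylinder_invariant_same_point[OF 3(2)] p by simp
  qed
qed

lemma cylinder_invariant_equivclp:
  assumes "d > 0" "equivclp (cyl_step d v) p q"
  shows "cylinder_invariant d v p = cylinder_invariant d v q"
  using assms(2)
proof (induction rule: equivclp_induct)
  case (step y z)
  then show ?case using cylinder_invariant_cyl_step[OF assms(1)] by (metis symclp_def)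
qed simp

lemma cyl_pts_equivclp:
  assumes "equivclp (cyl_step d v) p q" "p \<in> cyl_pts d v"
  shows "q \<in> cyl_pts d v"
  using assms by (induction rule: equivclp_induct) (auto simp: cyl_step_def symclp_def)

lemma leaf_length_eq:
  assumes d: "d > 0" and p: "p \<in> cyl_pts d v"
  shows "leaf_length d v p = real d / real_of_int (gcd (monodromy v (Im (snd p))) (int d))"
proof -
  obtain j z where p_eq: "p = (j, z)" by (cases p)
  have reg: "regular_height v (Im z)" and off: "off_slit v z"
    using p unfolding cyl_pts_iff[OF d] p_eq by auto
  define s where "s = monodromy v (Im z)"
  define n0 where "n0 = int d div gcd s (int d)"
  have "n0 > 0" unfolding n0_def using d
    by (simp add: pos_imp_zdiv_pos_iff zdvd_imp_le)
  define T where "T = {t::real. t > 0 \<and> same_point d (slit_move d v (j, z) (of_real t)) (j, z)}"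
  have T_iff: "t \<in> T \<longleftrightarrow> (\<exists>n. t = of_int n \<and> n > 0 \<and> n0 dvd n)" for t
  proof -
    have "same_point d (slit_move d v (j, z) (of_real t)) (j, z) \<longleftrightarrow>
          (\<exists>n. t = of_int n \<and> int d dvd n * s)"
      unfolding same_point_def slit_move_def lattice_iff
      by (auto simp: crossings_full_turns[OF reg off] s_def mod_eq_dvd_iff elim!: Ints_cases)
    then show ?thesis
      unfolding T_def n0_def using d by (auto simp: dvd_mult_iff_div_gcd_dvd)
  qed
  have "leaf_length d v p = Inf T" unfolding leaf_length_def T_def p_eq ..
  also have "\<dots> = of_int n0"
    using \<open>n0 > 0\<close> by (intro cInf_eq_minimum) (auto simp: T_iff zdvd_imp_le)
  also have "\<dots> = real d / real_of_int (gcd s (int d))"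
    unfolding n0_def by (simp add: real_of_int_div)
  finally show ?thesis unfolding s_def p_eq by simp
qed

section \<open>Connecting points with equal invariants\<close>

lemma slit_move_in_cyl_pts:
  assumes "d > 0" "regular_height v (Im (snd p + w))" "off_slit v (snd p + w)"
  shows "slit_move d v p w \<in> cyl_pts d v"
  using assms unfolding cyl_pts_iff[OF assms(1)] slit_move_def by simp

lemma equivclp_cyl_step_stair:
  assumes d: "d > 0" and q: "q \<in> cyl_pts d v"
    and vertical: "\<forall>r\<in>closed_segment 0 \<delta>.
                     regular_height v (Im (snd q) + r) \<and> off_slit v (snd q + \<i> * of_real r)"
    and off_end: "off_slit v (snd q + Complex h \<delta>)"
  obtains q' where "q' \<in> cyl_pts d v" "snd q' = snd q + Complex h \<delta>"
    "equivclp (cyl_step d v) q q'"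
proof
  define r where "r = slit_move d v q (\<i> * of_real \<delta>)"
  define q' where "q' = slit_move d v r (of_real h)"
  have "r \<in> cyl_pts d v"
    unfolding r_def using vertical by (intro slit_move_in_cyl_pts[OF d]) auto
  have "cyl_step d v q r"
    unfolding cyl_step_def
  proof (intro conjI disjI2 q \<open>r \<in> cyl_pts d v\<close> exI[of _ \<delta>] ballI)
    fix \<rho> assume "\<rho> \<in> closed_segment 0 \<delta>"
    then show "hreg v (snd q + \<i> * of_real \<rho>)" "hclosed d v (slit_move d v q (\<i> * of_real \<rho>))"
      using vertical hclosed_if_off_slit[OF d]
      by (auto simp: hreg_iff_regular_height slit_move_def)
  qed (simp add: r_def same_point_refl)
  have snd_r: "snd r = snd q + \<i> * of_real \<delta>" unfolding r_def slit_move_def by simp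
  have snd_q': "snd r + of_real h = snd q + Complex h \<delta>"
    unfolding snd_r by (simp add: complex_eq_iff)
  show "snd q' = snd q + Complex h \<delta>" unfolding q'_def slit_move_def snd_q' by simp
  show "q' \<in> cyl_pts d v"
    unfolding q'_def using vertical off_end by (intro slit_move_in_cyl_pts[OF d]) (auto simp: snd_q')
  then have "cyl_step d v r q'"
    unfolding cyl_step_def q'_def using \<open>r \<in> cyl_pts d v\<close> same_point_refl by blast
  with \<open>cyl_step d v q r\<close> show "equivclp (cyl_step d v) q q'"
    by (blast intro: equivclp_trans)
qed

lemma slit_abscissa_along_slit:
  "Im v \<noteq> 0 \<Longrightarrow> slit_abscissa v k (z + Complex (Re v / Im v * t - \<eta>) t) = slit_abscissa v k z - \<eta>"
  unfolding slit_abscissa_def by (simp add: field_simps)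

lemma off_slit_near_slit_direction:
  assumes strip: "\<forall>y\<in>closed_segment (Im z) (Im z + H). regular_height v y" and off: "off_slit v z"
  obtains e where "e > 0" "\<And>l \<eta>. 0 \<le> l \<Longrightarrow> l \<le> 1 \<Longrightarrow> \<bar>\<eta>\<bar> < e \<Longrightarrow>
                     off_slit v (z + Complex (Re v / Im v * (l * H) - \<eta>) (l * H))"
proof -
  obtain e where e: "e > 0"
    "\<forall>k\<in>slit_levels v (Im z). \<forall>\<eta>. \<bar>\<eta>\<bar> < e \<longrightarrow> slit_abscissa v k z - \<eta> \<notin> \<int>"
    using off unfolding off_slit_def by (rule uniform_margin_from_Ints[OF finite_slit_levels])
  show thesis
  proof (rule that[OF e(1)])
    fix l \<eta> :: real assume l: "0 \<le> l" "l \<le> 1" and "\<bar>\<eta>\<bar> < e"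
    show "off_slit v (z + Complex (Re v / Im v * (l * H) - \<eta>) (l * H))"
    proof (cases "Im v = 0")
      case True
      then show ?thesis by (simp add: off_slit_def slit_levels_horizontal)
    next
      case False
      have "slit_levels v (Im z + l * H) = slit_levels v (Im z)"
        using slit_levels_along_segment(1)[of z "Complex 0 H"] strip l by simp
      then show ?thesis using e(2) \<open>\<bar>\<eta>\<bar> < e\<close>
        unfolding off_slit_def slit_abscissa_along_slit[OF False] by simp
    qed
  qed
qed

lemma equivclp_staircase:
  fixes n N :: nat and c \<delta> e :: real
  assumes d: "d > 0" and p: "p \<in> cyl_pts d v" and c\<delta>: "\<bar>c * \<delta>\<bar> < e"
    and good: "\<And>l \<eta>. 0 \<le> l \<Longrightarrow> l \<le> 1 \<Longrightarrow> \<bar>\<eta>\<bar> < e \<Longrightarrow>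
                 regular_height v (Im (snd p) + l * (N * \<delta>))
                 \<and> off_slit v (snd p + Complex (c * (l * (N * \<delta>)) - \<eta>) (l * (N * \<delta>)))"
    and "n \<le> N"
  shows "\<exists>q. q \<in> cyl_pts d v \<and> snd q = snd p + Complex (c * (real n * \<delta>)) (real n * \<delta>)
             \<and> equivclp (cyl_step d v) p q"
  using \<open>n \<le> N\<close>
proof (induction n)
  case 0
  show ?case using p by (intro exI[of _ p]) (simp add: complex_eq_iff)
next
  case (Suc n)
  then obtain q where q: "q \<in> cyl_pts d v"
    "snd q = snd p + Complex (c * (real n * \<delta>)) (real n * \<delta>)" "equivclp (cyl_step d v) p q"
    by auto
  define l where "l u = (real n + u) / N" for u
  have l01: "0 \<le> l u" "l u \<le> 1" if "0 \<le> u" "u \<le> 1" for u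
    using that Suc.prems unfolding l_def by auto
  have "\<forall>r\<in>closed_segment 0 \<delta>.
          regular_height v (Im (snd q) + r) \<and> off_slit v (snd q + \<i> * of_real r)"
  proof
    fix r assume "r \<in> closed_segment 0 \<delta>"
    then obtain u where u: "0 \<le> u" "u \<le> 1" "r = u * \<delta>" unfolding in_segment by auto
    have "\<bar>c * (u * \<delta>)\<bar> = u * \<bar>c * \<delta>\<bar>" using u by (simp add: abs_mult)
    also have "\<dots> \<le> \<bar>c * \<delta>\<bar>" using u by (simp add: mult_left_le_one_le)
    finally have "\<bar>c * (u * \<delta>)\<bar> < e" using c\<delta> by linarith
    note good = good[OF l01[OF u(1,2)] this]
    have on_stairs: "snd q + \<i> * of_real r
        = snd p + Complex (c * (l u * (N * \<delta>)) - c * (u * \<delta>)) (l u * (N * \<delta>))"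
      using Suc.prems unfolding q(2) u(3) l_def by (simp add: complex_eq_iff field_simps)
    have "Im (snd q) + r = Im (snd p) + l u * (N * \<delta>)"
      using arg_cong[OF on_stairs, of Im] by simp
    with good show "regular_height v (Im (snd q) + r) \<and> off_slit v (snd q + \<i> * of_real r)"
      unfolding on_stairs by simp
  qed
  moreover have "snd q + Complex (c * \<delta>) \<delta>
      = snd p + Complex (c * (l 1 * (N * \<delta>)) - 0) (l 1 * (N * \<delta>))"
    using Suc.prems unfolding q(2) l_def by (simp add: complex_eq_iff field_simps)
  then have "off_slit v (snd q + Complex (c * \<delta>) \<delta>)"
    using good[OF l01[of 1], of 0] c\<delta> by simp
  ultimately obtain q' where "q' \<in> cyl_pts d v" "snd q' = snd q + Complex (c * \<delta>) \<delta>"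
    "equivclp (cyl_step d v) q q'"
    using equivclp_cyl_step_stair[OF d q(1)] by blast
  then show ?case using q(2,3)
    by (intro exI[of _ q']) (auto simp: complex_eq_iff algebra_simps intro: equivclp_trans)
qed

text \<open>Vertical moves may run into the slit, so we climb along a staircase that follows the
  direction of the slit, where the slit abscissas stay within a margin of their initial
  non-integral values.\<close>
lemma equivclp_climb:
  assumes d: "d > 0" and p: "p \<in> cyl_pts d v"
    and strip: "\<forall>y\<in>closed_segment (Im (snd p)) y'. regular_height v y"
  obtains q where "q \<in> cyl_pts d v" "Im (snd q) = y'" "equivclp (cyl_step d v) p q"
proof -
  define z where "z = snd p"
  define c where "c = Re v / Im v"
  define H where "H = y' - Im z"
  have strip': "\<forall>y\<in>closed_segment (Im z) (Im z + H). regular_height v y"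
    using strip unfolding z_def H_def by simp
  have "off_slit v z" using p unfolding z_def cyl_pts_iff[OF d] by simp
  then obtain e where e: "e > 0" and off_near:
    "\<And>l \<eta>. 0 \<le> l \<Longrightarrow> l \<le> 1 \<Longrightarrow> \<bar>\<eta>\<bar> < e \<Longrightarrow> off_slit v (z + Complex (c * (l * H) - \<eta>) (l * H))"
    using off_slit_near_slit_direction[OF strip'] unfolding c_def by blast
  obtain n where "\<bar>c * H\<bar> < of_nat n * e" using ex_less_of_nat_mult[OF e] by blast
  define N where "N = Suc n"
  have N: "N > 0" "\<bar>c * H\<bar> < real N * e"
    unfolding N_def using \<open>\<bar>c * H\<bar> < of_nat n * e\<close> e by (auto simp: algebra_simps)
  define \<delta> where "\<delta> = H / real N"
  have H: "H = real N * \<delta>" using N(1) unfolding \<delta>_def by simp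
  have "\<bar>c * \<delta>\<bar> < e"
    using N unfolding \<delta>_def by (simp add: abs_mult abs_divide divide_less_eq mult.commute)
  moreover have "regular_height v (Im z + l * H)" if "0 \<le> l" "l \<le> 1" for l
    using slit_levels_along_segment(2)[of z "Complex 0 H"] strip' that by simp
  ultimately obtain q where "q \<in> cyl_pts d v"
    "snd q = z + Complex (c * (real N * \<delta>)) (real N * \<delta>)" "equivclp (cyl_step d v) p q"
    using equivclp_staircase[OF d p, of c \<delta> e N N] off_near unfolding z_def[symmetric] H by blast
  moreover have "Im (z + Complex (c * (real N * \<delta>)) (real N * \<delta>)) = y'"
    unfolding H[symmetric] H_def by simp
  ultimately show thesis using that by simp
qed

lemma equivclp_frac_height:
  assumes d: "d > 0" and p: "p \<in> cyl_pts d v"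
  obtains p' where "p' \<in> cyl_pts d v" "Im (snd p') = frac (Im (snd p))"
    "equivclp (cyl_step d v) p p'"
proof
  define p' where "p' = (fst p, snd p + Complex (of_int 0) (of_int (- \<lfloor>Im (snd p)\<rfloor>)))"
  show "Im (snd p') = frac (Im (snd p))" unfolding p'_def frac_def by simp
  show "p' \<in> cyl_pts d v"
    using p regular_height_add_of_int[of v "Im (snd p)" "- \<lfloor>Im (snd p)\<rfloor>"]
      off_slit_add_lattice[of v "snd p" 0 "- \<lfloor>Im (snd p)\<rfloor>"]
    unfolding p'_def cyl_pts_iff[OF d] by simp
  have "same_point d p p'" unfolding same_point_def p'_def lattice_iff by simp
  with p \<open>p' \<in> cyl_pts d v\<close> show "equivclp (cyl_step d v) p p'"
    unfolding cyl_step_def by blast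
qed

text \<open>On a common height, a horizontal move by a suitable multiple of a Bezout coefficient
  adjusts the copy index by the required multiple of the gcd.\<close>
lemma cyl_step_same_height:
  assumes d: "d > 0" and p: "p \<in> cyl_pts d v" and q: "q \<in> cyl_pts d v"
    and height: "Im (snd p) = Im (snd q)"
    and inv: "cylinder_invariant d v p = cylinder_invariant d v q"
  shows "cyl_step d v p q"
proof -
  obtain jp zp jq zq where pq: "p = (jp, zp)" "q = (jq, zq)" by (cases p, cases q)
  have reg: "regular_height v (Im zp)" and off: "off_slit v zp" "off_slit v zq"
    using p q unfolding pq cyl_pts_iff[OF d] by auto
  define s where "s = monodromy v (Im zq)"
  define G where "G = gcd s (int d)"
  have "G dvd (jq - slit_potential v zq) - (jp - slit_potential v zp)"
    using inv height unfolding cylinder_invariant_def pq G_def s_def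
    by (simp add: mod_eq_dvd_iff dvd_diff_commute)
  then obtain e where e: "(jq - slit_potential v zq) - (jp - slit_potential v zp) = G * e" by blast
  obtain a b where ab: "a * s + b * int d = G" unfolding G_def using bezout_int by blast
  define t where "t = Re zq - Re zp + of_int (a * e)"
  have zt: "zp + of_real t = zq + Complex (of_int (a * e)) (of_int 0)"
    unfolding t_def using height pq by (simp add: complex_eq_iff)
  have "off_slit v (zp + of_real t)" unfolding zt using off(2) off_slit_add_lattice by blast
  then have "crossings v zp (of_real t) = slit_potential v (zp + of_real t) - slit_potential v zp"
    by (rule crossings_horizontal[OF reg off(1)])
  then have "crossings v zp (of_real t) = slit_potential v zq + a * e * s - slit_potential v zp"
    unfolding zt s_def slit_potential_add_lattice by simp
  moreover have "jq - (jp + (slit_potential v zq + a * e * s - slit_potential v zp)) = int d * (b * e)"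
    using e ab[symmetric] by (simp add: algebra_simps)
  ultimately have "same_point d q (slit_move d v p (of_real t))"
    unfolding same_point_def slit_move_def pq using zt
    by (simp add: mod_eq_dvd_iff lattice_iff dvd_def)
  then show ?thesis using p q unfolding cyl_step_def by blast
qed

lemma regular_between_same_monodromy:
  assumes y: "0 < y1" "y1 < 1" "0 < y2" "y2 < 1"
    and reg: "regular_height v y1" "regular_height v y2"
    and same: "monodromy v y1 = monodromy v y2"
  shows "\<forall>y\<in>closed_segment y1 y2. regular_height v y"
proof
  fix y assume "y \<in> closed_segment y1 y2"
  then have between: "min y1 y2 \<le> y" "y \<le> max y1 y2"
    by (auto simp: closed_segment_eq_real_ivl split: if_splits)
  define m where "m = \<lfloor>Im v - y1\<rfloor>"
  have "\<lfloor>y1\<rfloor> = 0" "\<lfloor>y2\<rfloor> = 0" using y by (simp_all add: floor_eq_iff)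
  then have m2: "\<lfloor>Im v - y2\<rfloor> = m"
    using same monodromy_eq_floor[OF reg(1)] monodromy_eq_floor[OF reg(2)] unfolding m_def by simp
  have "Im v - y1 \<notin> \<int>" "Im v - y2 \<notin> \<int>"
    using reg unfolding regular_height_def by (metis Ints_minus minus_diff_eq)+
  then have "of_int m < Im v - y1" "of_int m < Im v - y2"
    using m2 unfolding m_def by (metis Ints_of_int of_int_floor_le order_le_neq_trans)+
  moreover have "Im v - y1 < of_int m + 1" "Im v - y2 < of_int m + 1"
    using m2 unfolding m_def by linarith+
  ultimately have "Im v - y \<notin> \<int>"
    using between by (intro of_int_between_not_in_Ints[of m]) (auto simp: min_def max_def split: if_splits)
  moreover have "y \<notin> \<int>"
    using between y by (intro of_int_between_not_in_Ints[of 0]) (auto simp: min_def max_def split: if_splits)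
  ultimately show "regular_height v y"
    unfolding regular_height_def by (metis Ints_minus minus_diff_eq)
qed

lemma equivclp_iff_cylinder_invariant:
  assumes d: "d > 0" and p: "p \<in> cyl_pts d v" and q: "q \<in> cyl_pts d v"
  shows "equivclp (cyl_step d v) p q \<longleftrightarrow> cylinder_invariant d v p = cylinder_invariant d v q"
proof
  assume "equivclp (cyl_step d v) p q"
  then show "cylinder_invariant d v p = cylinder_invariant d v q"
    by (rule cylinder_invariant_equivclp[OF d])
next
  assume inv: "cylinder_invariant d v p = cylinder_invariant d v q"
  obtain p1 where p1: "p1 \<in> cyl_pts d v" "Im (snd p1) = frac (Im (snd p))"
    "equivclp (cyl_step d v) p p1" using equivclp_frac_height[OF d p] .
  obtain q1 where q1: "q1 \<in> cyl_pts d v" "Im (snd q1) = frac (Im (snd q))"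
    "equivclp (cyl_step d v) q q1" using equivclp_frac_height[OF d q] .
  have inv1: "cylinder_invariant d v p1 = cylinder_invariant d v q1"
    using inv cylinder_invariant_equivclp[OF d p1(3)] cylinder_invariant_equivclp[OF d q1(3)] by simp
  have "regular_height v (Im (snd p1))" "regular_height v (Im (snd q1))"
    using p1(1) q1(1) unfolding cyl_pts_iff[OF d] by simp_all
  moreover have "frac (Im (snd p)) > 0" "frac (Im (snd q)) > 0"
    using p q unfolding cyl_pts_iff[OF d] regular_height_def
    by (simp_all add: frac_eq_0_iff order_le_neq_trans[OF frac_ge_0])
  ultimately have "\<forall>y\<in>closed_segment (Im (snd p1)) (Im (snd q1)). regular_height v y"
    using inv1 p1(2) q1(2)
    by (intro regular_between_same_monodromy) (auto simp: cylinder_invariant_def frac_lt_1)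
  then obtain p2 where p2: "p2 \<in> cyl_pts d v" "Im (snd p2) = Im (snd q1)"
    "equivclp (cyl_step d v) p1 p2" using equivclp_climb[OF d p1(1)] by blast
  have "cyl_step d v p2 q1"
    using cyl_step_same_height[OF d p2(1) q1(1) p2(2)] inv1
      cylinder_invariant_equivclp[OF d p2(3)] by simp
  then show "equivclp (cyl_step d v) p q"
    using p1(3) p2(3) q1(3) by (blast intro: equivclp_trans equivclp_sym)
qed

section \<open>Counting the maximal cylinders\<close>

definition cylinder_of :: "nat \<Rightarrow> complex \<Rightarrow> int \<times> complex \<Rightarrow> (int \<times> complex) set" where
  "cylinder_of d v p = {q. equivclp (cyl_step d v) p q}"

lemma max_cylinders_eq_image: "max_cylinders d v = cylinder_of d v ` cyl_pts d v"
  unfolding max_cylinders_def cylinder_of_def by auto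

lemma self_in_cylinder_of: "p \<in> cylinder_of d v p"
  unfolding cylinder_of_def by simp

lemma mem_cylinder_of:
  assumes "d > 0" "p \<in> cyl_pts d v" "x \<in> cylinder_of d v p"
  shows "x \<in> cyl_pts d v" "cylinder_invariant d v x = cylinder_invariant d v p"
  using assms cyl_pts_equivclp cylinder_invariant_equivclp unfolding cylinder_of_def by auto

lemma cylinder_of_eq_iff:
  assumes d: "d > 0" and "p \<in> cyl_pts d v" "q \<in> cyl_pts d v"
  shows "cylinder_of d v p = cylinder_of d v q \<longleftrightarrow>
           cylinder_invariant d v p = cylinder_invariant d v q"
proof -
  have "cylinder_of d v p = cylinder_of d v q \<longleftrightarrow> equivclp (cyl_step d v) p q"
  proof
    assume "cylinder_of d v p = cylinder_of d v q"
    then show "equivclp (cyl_step d v) p q"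
      using self_in_cylinder_of[of q d v] unfolding cylinder_of_def by blast
  next
    assume "equivclp (cyl_step d v) p q"
    then show "cylinder_of d v p = cylinder_of d v q"
      unfolding cylinder_of_def by (blast intro: equivclp_trans equivclp_sym)
  qed
  then show ?thesis using equivclp_iff_cylinder_invariant[OF assms] by simp
qed

definition monodromy_cylinders :: "nat \<Rightarrow> complex \<Rightarrow> int \<Rightarrow> (int \<times> complex) set set" where
  "monodromy_cylinders d v s = {C \<in> max_cylinders d v. \<forall>p\<in>C. monodromy v (Im (snd p)) = s}"

lemma max_cylinders_in_monodromy_cylinders:
  assumes "d > 0" "C \<in> max_cylinders d v"
  obtains y where "regular_height v y" "C \<in> monodromy_cylinders d v (monodromy v y)"
proof -
  obtain p where p: "p \<in> cyl_pts d v" "C = cylinder_of d v p"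
    using assms(2) unfolding max_cylinders_eq_image by blast
  then have "regular_height v (Im (snd p))" using cyl_pts_iff[OF assms(1)] by blast
  moreover have "C \<in> monodromy_cylinders d v (monodromy v (Im (snd p)))"
    using mem_cylinder_of[OF assms(1) p(1)] assms(2) p(2)
    unfolding monodromy_cylinders_def cylinder_invariant_def by auto
  ultimately show thesis by (rule that)
qed

lemma monodromy_cylinders_disjoint:
  "s \<noteq> s' \<Longrightarrow> monodromy_cylinders d v s \<inter> monodromy_cylinders d v s' = {}"
  unfolding monodromy_cylinders_def max_cylinders_eq_image
  using self_in_cylinder_of by fastforce

lemma leaf_length_monodromy_cylinders:
  assumes "d > 0" "C \<in> monodromy_cylinders d v s" "p \<in> C"
  shows "leaf_length d v p = real d / real_of_int (gcd s (int d))"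
proof -
  obtain p0 where "p0 \<in> cyl_pts d v" "C = cylinder_of d v p0"
    using assms(2) unfolding monodromy_cylinders_def max_cylinders_eq_image by blast
  then have "p \<in> cyl_pts d v" using mem_cylinder_of(1)[OF assms(1)] assms(3) by blast
  with assms show ?thesis using leaf_length_eq[OF assms(1)] unfolding monodromy_cylinders_def by simp
qed

lemma exists_off_slit: "\<exists>x. off_slit v (Complex x y)"
proof -
  define S where "S = (\<Union>k\<in>slit_levels v y. range (\<lambda>m::int. of_int m + Re v * (y - of_int k) / Im v))"
  have "countable S" unfolding S_def using finite_slit_levels by (intro countable_UN) auto
  then obtain x where "x \<notin> S" using uncountable_UNIV_real by (metis UNIV_I subsetI countable_subset)
  then have "off_slit v (Complex x y)"
    unfolding off_slit_def slit_abscissa_def S_def by (auto elim!: Ints_cases simp: algebra_simps)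
  then show ?thesis ..
qed

lemma cylinder_invariant_copy_index:
  assumes d: "d > 0" and "regular_height v (Im z)" "off_slit v z"
  shows "((slit_potential v z + c) mod int d, z) \<in> cyl_pts d v"
    "cylinder_invariant d v ((slit_potential v z + c) mod int d, z)
       = (monodromy v (Im z), c mod gcd (monodromy v (Im z)) (int d))"
proof -
  show "((slit_potential v z + c) mod int d, z) \<in> cyl_pts d v"
    unfolding cyl_pts_iff[OF d] using assms by simp
  have "int d dvd (slit_potential v z + c) mod int d - (slit_potential v z + c)"
    by (simp add: mod_eq_dvd_iff[symmetric])
  then have "gcd (monodromy v (Im z)) (int d)
               dvd ((slit_potential v z + c) mod int d - slit_potential v z) - c"
    by (simp add: dvd_trans[OF gcd_dvd2] diff_diff_eq)
  then show "cylinder_invariant d v ((slit_potential v z + c) mod int d, z)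
               = (monodromy v (Im z), c mod gcd (monodromy v (Im z)) (int d))"
    unfolding cylinder_invariant_def by (simp add: mod_eq_dvd_iff)
qed

text \<open>The cylinders of a given monodromy s are indexed by the residues of the corrected copy
  index modulo gcd s d, all realised on a single horizontal leaf.\<close>
lemma card_monodromy_cylinders:
  assumes d: "d > 0" and reg: "regular_height v y"
  shows "finite (monodromy_cylinders d v (monodromy v y))"
    "int (card (monodromy_cylinders d v (monodromy v y))) = gcd (monodromy v y) (int d)"
proof -
  obtain x where "off_slit v (Complex x y)" using exists_off_slit by blast
  define s where "s = monodromy v y"
  define G where "G = gcd s (int d)"
  have "G > 0" unfolding G_def using d by simp
  define pt where "pt c = ((slit_potential v (Complex x y) + c) mod int d, Complex x y)" for c
  have pt: "pt c \<in> cyl_pts d v" and inv_pt: "cylinder_invariant d v (pt c) = (s, c mod G)" for c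
    using cylinder_invariant_copy_index[OF d, where z = "Complex x y" and c = c] reg \<open>off_slit v (Complex x y)\<close>
    unfolding pt_def s_def G_def by simp_all
  have bij: "bij_betw (\<lambda>c. cylinder_of d v (pt c)) {0..<G} (monodromy_cylinders d v s)"
  proof (intro bij_betwI' ballI)
    fix a b assume "a \<in> {0..<G}" "b \<in> {0..<G}"
    then show "(cylinder_of d v (pt a) = cylinder_of d v (pt b)) = (a = b)"
      using cylinder_of_eq_iff[OF d pt pt] inv_pt by auto
  next
    fix c assume "c \<in> {0..<G}"
    show "cylinder_of d v (pt c) \<in> monodromy_cylinders d v s"
      using mem_cylinder_of[OF d pt] pt inv_pt
      unfolding monodromy_cylinders_def max_cylinders_eq_image cylinder_invariant_def by auto
  next
    fix C assume "C \<in> monodromy_cylinders d v s"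
    then obtain p where p: "p \<in> cyl_pts d v" "C = cylinder_of d v p" "monodromy v (Im (snd p)) = s"
      unfolding monodromy_cylinders_def max_cylinders_eq_image using self_in_cylinder_of by blast
    define c where "c = (fst p - slit_potential v (snd p)) mod G"
    have "c \<in> {0..<G}" unfolding c_def using \<open>G > 0\<close> by simp
    moreover have "cylinder_invariant d v p = (s, c)"
      using p(3) unfolding cylinder_invariant_def c_def G_def by simp
    then have "cylinder_invariant d v p = cylinder_invariant d v (pt c)"
      unfolding inv_pt c_def by simp
    ultimately show "\<exists>c\<in>{0..<G}. C = cylinder_of d v (pt c)"
      using cylinder_of_eq_iff[OF d p(1) pt] p(2) by blast
  qed
  show "finite (monodromy_cylinders d v (monodromy v y))"
    "int (card (monodromy_cylinders d v (monodromy v y))) = gcd (monodromy v y) (int d)"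
    using bij_betw_finite[OF bij] bij_betw_same_card[OF bij] \<open>G > 0\<close>
    unfolding s_def[symmetric] G_def[symmetric] by simp_all
qed

lemma monodromy_cylinders_count:
  assumes d: "d > 0" and "regular_height v y" "monodromy v y = s" "gcd s (int d) = int n"
  shows "finite (monodromy_cylinders d v s)" "card (monodromy_cylinders d v s) = n"
    "\<forall>C\<in>monodromy_cylinders d v s. \<forall>p\<in>C. leaf_length d v p = real d / real n"
  using card_monodromy_cylinders[OF d assms(2)] leaf_length_monodromy_cylinders[OF d] assms(3,4)
  by auto

lemma max_cylinders_eq_Un_monodromy_cylinders:
  assumes "d > 0" "\<And>y. regular_height v y \<Longrightarrow> monodromy v y \<in> S"
  shows "max_cylinders d v = (\<Union>s\<in>S. monodromy_cylinders d v s)"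
proof
  show "max_cylinders d v \<subseteq> (\<Union>s\<in>S. monodromy_cylinders d v s)"
  proof
    fix C assume "C \<in> max_cylinders d v"
    then obtain y where "regular_height v y" "C \<in> monodromy_cylinders d v (monodromy v y)"
      by (rule max_cylinders_in_monodromy_cylinders[OF assms(1)])
    then show "C \<in> (\<Union>s\<in>S. monodromy_cylinders d v s)" using assms(2) by blast
  qed
qed (auto simp: monodromy_cylinders_def)

lemma max_cylinders_eq_Un_monodromy_cylinders_floor:
  assumes "d > 0"
  shows "max_cylinders d v
           = monodromy_cylinders d v \<lfloor>Im v\<rfloor> \<union> monodromy_cylinders d v (\<lfloor>Im v\<rfloor> + 1)"
proof -
  have "monodromy v y \<in> {\<lfloor>Im v\<rfloor>, \<lfloor>Im v\<rfloor> + 1}" if "regular_height v y" for y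
    using monodromy_eq_frac[OF that] by simp
  from max_cylinders_eq_Un_monodromy_cylinders[OF assms this] show ?thesis by simp
qed

lemma max_cylinders_eq_monodromy_cylinders_floor:
  assumes "d > 0" "Im v \<in> \<int>"
  shows "max_cylinders d v = monodromy_cylinders d v \<lfloor>Im v\<rfloor>"
proof -
  have "frac (Im v) = 0" using assms(2) by (simp add: frac_eq_0_iff)
  have "monodromy v y \<in> {\<lfloor>Im v\<rfloor>}" if "regular_height v y" for y
  proof -
    have "\<not> frac y < frac (Im v)" unfolding \<open>frac (Im v) = 0\<close> by (simp add: not_less)
    then show ?thesis using monodromy_eq_frac[OF that] by simp
  qed
  from max_cylinders_eq_Un_monodromy_cylinders[OF assms(1) this] show ?thesis by simp
qed

lemma monodromy_cylinders_floor:
  assumes "d > 0" "gcd \<lfloor>Im v\<rfloor> (int d) = int n"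
  shows "finite (monodromy_cylinders d v \<lfloor>Im v\<rfloor>)" "card (monodromy_cylinders d v \<lfloor>Im v\<rfloor>) = n"
    "\<forall>C\<in>monodromy_cylinders d v \<lfloor>Im v\<rfloor>. \<forall>p\<in>C. leaf_length d v p = real d / real n"
proof -
  define y where "y = (1 + frac (Im v)) / 2"
  have "0 \<le> frac (Im v)" "frac (Im v) < 1" by (rule frac_ge_0, rule frac_lt_1)
  then have "0 < y" "y < 1" "frac (Im v) < y" unfolding y_def by (simp_all del: frac_ge_0)
  then have "regular_height v y" "monodromy v y = \<lfloor>Im v\<rfloor>"
    using regular_height_unit_interval[of y v] monodromy_eq_frac[of v y] by (simp_all add: frac_eq)
  from monodromy_cylinders_count[OF assms(1) this assms(2)]
  show "finite (monodromy_cylinders d v \<lfloor>Im v\<rfloor>)" "card (monodromy_cylinders d v \<lfloor>Im v\<rfloor>) = n"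
    "\<forall>C\<in>monodromy_cylinders d v \<lfloor>Im v\<rfloor>. \<forall>p\<in>C. leaf_length d v p = real d / real n" .
qed

lemma monodromy_cylinders_floor_plus_one:
  assumes "d > 0" "Im v \<notin> \<int>" "gcd (\<lfloor>Im v\<rfloor> + 1) (int d) = int n"
  shows "finite (monodromy_cylinders d v (\<lfloor>Im v\<rfloor> + 1))"
    "card (monodromy_cylinders d v (\<lfloor>Im v\<rfloor> + 1)) = n"
    "\<forall>C\<in>monodromy_cylinders d v (\<lfloor>Im v\<rfloor> + 1). \<forall>p\<in>C. leaf_length d v p = real d / real n"
proof -
  define y where "y = frac (Im v) / 2"
  have "0 < frac (Im v)" "frac (Im v) < 1"
    using assms(2) frac_ge_0[of "Im v"] by (simp_all add: frac_eq_0_iff order_le_less frac_lt_1)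
  then have "0 < y" "y < 1" "y < frac (Im v)" unfolding y_def by (simp_all del: frac_ge_0)
  then have "regular_height v y" "monodromy v y = \<lfloor>Im v\<rfloor> + 1"
    using regular_height_unit_interval[of y v] monodromy_eq_frac[of v y] by (simp_all add: frac_eq)
  from monodromy_cylinders_count[OF assms(1) this assms(3)]
  show "finite (monodromy_cylinders d v (\<lfloor>Im v\<rfloor> + 1))"
    "card (monodromy_cylinders d v (\<lfloor>Im v\<rfloor> + 1)) = n"
    "\<forall>C\<in>monodromy_cylinders d v (\<lfloor>Im v\<rfloor> + 1). \<forall>p\<in>C. leaf_length d v p = real d / real n" .
qed

lemma max_cylinders_non_integral_height:
  assumes d: "d > 0" and "Im v \<notin> \<int>" and mod: "\<lfloor>Im v\<rfloor> mod int d = int i"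
  shows "\<exists>F1 F2. F1 \<inter> F2 = {} \<and> F1 \<union> F2 = max_cylinders d v \<and> finite F1 \<and> finite F2
           \<and> card F1 = gcd i d \<and> card F2 = gcd (i + 1) d
           \<and> (\<forall>C\<in>F1. \<forall>p\<in>C. leaf_length d v p = real d / real (gcd i d))
           \<and> (\<forall>C\<in>F2. \<forall>p\<in>C. leaf_length d v p = real d / real (gcd (i + 1) d))"
  using monodromy_cylinders_floor[OF d gcd_int_eq_if_mod_eq(1)[OF mod]]
    monodromy_cylinders_floor_plus_one[OF d \<open>Im v \<notin> \<int>\<close> gcd_int_eq_if_mod_eq(2)[OF mod]]
  by (intro exI[of _ "monodromy_cylinders d v \<lfloor>Im v\<rfloor>"] exI[of _ "monodromy_cylinders d v (\<lfloor>Im v\<rfloor> + 1)"])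
     (simp add: monodromy_cylinders_disjoint max_cylinders_eq_Un_monodromy_cylinders_floor[OF d])

lemma max_cylinders_integral_height:
  assumes d: "d > 0" and "Im v \<in> \<int>" and mod: "\<lfloor>Im v\<rfloor> mod int d = int i"
  shows "finite (max_cylinders d v) \<and> card (max_cylinders d v) = gcd i d
           \<and> (\<forall>C\<in>max_cylinders d v. \<forall>p\<in>C. leaf_length d v p = real d / real (gcd i d))"
  using monodromy_cylinders_floor[OF d gcd_int_eq_if_mod_eq(1)[OF mod]]
  unfolding max_cylinders_eq_monodromy_cylinders_floor[OF d \<open>Im v \<in> \<int>\<close>] by simp

theorem mainTheorem8:
  fixes d i :: nat and th tv :: real
  assumes "d \<ge> 2" and "i < d"
  shows "(tv \<notin> \<int> \<and> \<lfloor>tv\<rfloor> mod int d = int i \<longrightarrow>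
            (\<exists>F1 F2. F1 \<inter> F2 = {} \<and> F1 \<union> F2 = max_cylinders d (Complex th tv)
                \<and> finite F1 \<and> finite F2
                \<and> card F1 = gcd i d \<and> card F2 = gcd (i + 1) d
                \<and> (\<forall>C\<in>F1. \<forall>p\<in>C. leaf_length d (Complex th tv) p = real d / real (gcd i d))
                \<and> (\<forall>C\<in>F2. \<forall>p\<in>C. leaf_length d (Complex th tv) p = real d / real (gcd (i + 1) d))))
       \<and> (tv \<in> \<int> \<and> th \<notin> \<int> \<and> \<lfloor>tv\<rfloor> mod int d = int i \<longrightarrow>
            finite (max_cylinders d (Complex th tv))
            \<and> card (max_cylinders d (Complex th tv)) = gcd i d
            \<and> (\<forall>C\<in>max_cylinders d (Complex th tv). \<forall>p\<in>C.
                  leaf_length d (Complex th tv) p = real d / real (gcd i d)))"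
proof -
  have "d > 0" using assms(1) by simp
  then show ?thesis
    using max_cylinders_non_integral_height[of d "Complex th tv" i]
      max_cylinders_integral_height[of d "Complex th tv" i] by simp
qed

end
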